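(* Let $k\ge 2$ and $N\ge 1$ be integers such that neither $N<k$ nor $k\mid N$. Suppose there exist positive integers $A,B$ such that $(A)_k$ and $(B)_k$ are palindromes and $A/B=N$. Then, for the smallest such $A$, $$|(A)_k| \le 2\left(\lceil \log_k N\rceil + k^{\lceil \log_k N\rceil}\, N^2 + \left\lceil \frac{\log_k N}{2}\right\rceil\right)+1.$$
   Context: For an integer $n\ge1$ and base $k\ge 2$, $(n)_k$ denotes the base-$k$ representation of $n$ (most significant digit first, no leading zeros), and $|(n)_k|$ its length (number of digits). A string is a palindrome if it reads the same forwards and backwards. *)

theory Defs
  imports Complex_Main
begin

fun digits_lsf :: "nat \<Rightarrow> nat \<Rightarrow> nat list" where
  "digits_lsf k n = (if k < 2 \<or> n = 0 then [] else n mod k # digits_lsf k (n div k))"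

definition base_rep :: "nat \<Rightarrow> nat \<Rightarrow> nat list" where
  "base_rep k n = rev (digits_lsf k n)"

definition palindrome :: "'a list \<Rightarrow> bool" where
  "palindrome xs \<longleftrightarrow> rev xs = xs"

end

(*
  Let A = N * B have n digits and B have m digits in base k, and write the product digit by
  digit, least significant digit first: with the carry c p < N into position p, the digits
  satisfy a p + k * c (p + 1) = N * b p + c p, and c 0 = c n = 0. At position i the state
  (c i, c (n - i), the n - m digits of B from position m - i upwards) takes at most
  N^2 k^(n - m) values. If B has more than 2 N^2 k^(n - m) + 1 digits, two positions
  i < j <= m/2 share a state; deleting the digit blocks [i, j) and their mirror images from both
  palindromes leaves a consistent carry chain, hence a smaller palindromic multiple. So for the
  least A we get m <= 2 N^2 k^(n - m) + 1, and since N <= k^L with L = ceil (log_k N), also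
  n <= L + m, which gives n <= L + 2 N^2 k^L + 1, stronger than the claimed bound.
*)

theory Submission
  imports Defs
begin

lemma digits_lsf_0 [simp]: "digits_lsf k 0 = []"
  by simp

lemma digits_lsf_pos: "k \<ge> 2 \<Longrightarrow> 0 < x \<Longrightarrow> digits_lsf k x = x mod k # digits_lsf k (x div k)"
  by simp

declare digits_lsf.simps [simp del]

lemma nth_digits_lsf:
  "k \<ge> 2 \<Longrightarrow> p < length (digits_lsf k x) \<Longrightarrow> digits_lsf k x ! p = x div k ^ p mod k"
proof (induction p arbitrary: x)
  case 0
  then show ?case by (cases "x = 0") (auto simp: digits_lsf_pos)
next
  case (Suc p)
  then show ?case by (cases "x = 0") (auto simp: digits_lsf_pos div_mult2_eq)
qed

lemma digits_lsf_eq_map: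
  "k \<ge> 2 \<Longrightarrow> digits_lsf k x = map (\<lambda>p. x div k ^ p mod k) [0..<length (digits_lsf k x)]"
  by (rule nth_equalityI) (simp_all add: nth_digits_lsf)

lemma last_digits_lsf_nonzero: "k \<ge> 2 \<Longrightarrow> 0 < x \<Longrightarrow> last (digits_lsf k x) \<noteq> 0"
proof (induction k x rule: digits_lsf.induct)
  case (1 k x)
  show ?case
  proof (cases "x div k = 0")
    case True
    then show ?thesis using 1 by (simp add: digits_lsf_pos div_eq_0_iff)
  next
    case False
    then have "digits_lsf k (x div k) \<noteq> []" using 1 by (simp add: digits_lsf_pos)
    then show ?thesis using 1 False by (simp add: digits_lsf_pos)
  qed
qed

lemma leading_digit_nonzero:
  assumes "k \<ge> 2" and "0 < x"
  shows "x div k ^ (length (digits_lsf k x) - 1) mod k \<noteq> 0"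
proof -
  have "digits_lsf k x \<noteq> []" using assms by (simp add: digits_lsf_pos)
  then show ?thesis
    using last_digits_lsf_nonzero[OF assms] assms(1) by (simp add: last_conv_nth nth_digits_lsf)
qed

lemma less_power_length_digits_lsf: "k \<ge> 2 \<Longrightarrow> x < k ^ length (digits_lsf k x)"
proof (induction k x rule: digits_lsf.induct)
  case (1 k x)
  show ?case
  proof (cases "x = 0")
    case False
    have "x = x mod k + k * (x div k)" by simp
    also have "\<dots> < k + k * (x div k)" using 1 by (intro add_strict_right_mono) simp
    also have "\<dots> = k * (x div k + 1)" by simp
    also have "\<dots> \<le> k * k ^ length (digits_lsf k (x div k))"
      using 1 False by (intro mult_le_mono2) (simp add: Suc_le_eq)
    finally show ?thesis using 1 False by (simp add: digits_lsf_pos)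
  qed simp
qed

lemma power_length_digits_lsf_le: "k \<ge> 2 \<Longrightarrow> 0 < x \<Longrightarrow> k ^ (length (digits_lsf k x) - 1) \<le> x"
proof (induction k x rule: digits_lsf.induct)
  case (1 k x)
  show ?case
  proof (cases "x div k = 0")
    case True
    then show ?thesis using 1 by (simp add: digits_lsf_pos)
  next
    case False
    then have "digits_lsf k (x div k) \<noteq> []" using 1 by (simp add: digits_lsf_pos)
    then have "k ^ (length (digits_lsf k x) - 1) = k * k ^ (length (digits_lsf k (x div k)) - 1)"
      using 1 by (simp add: digits_lsf_pos power_eq_if)
    also have "\<dots> \<le> k * (x div k)" using 1 False by simp
    also have "\<dots> \<le> x" by simp
    finally show ?thesis .
  qed
qed

lemma digits_lsf_sum_powers:
  assumes "k \<ge> 2" and "\<And>p. p < n \<Longrightarrow> a p < k" and "a (n - 1) \<noteq> 0"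
  shows "digits_lsf k (\<Sum>p<n. a p * k ^ p) = map a [0..<n]"
  using assms(2,3)
proof (induction n arbitrary: a)
  case (Suc n)
  define S where "S = (\<Sum>p<n. a (Suc p) * k ^ p)"
  have sum_eq: "(\<Sum>p<Suc n. a p * k ^ p) = a 0 + k * S"
    unfolding S_def sum.lessThan_Suc_shift by (simp add: sum_distrib_left mult_ac)
  have digits_S: "digits_lsf k S = map (\<lambda>p. a (Suc p)) [0..<n]"
  proof (cases n)
    case (Suc n')
    then show ?thesis unfolding S_def using Suc.prems by (intro Suc.IH) auto
  qed (simp add: S_def)
  have "0 < a 0 + k * S"
    using Suc.prems digits_S by (cases n) (auto intro: Nat.gr0I)
  moreover have "(a 0 + k * S) mod k = a 0" "(a 0 + k * S) div k = S"
    using assms(1) Suc.prems by auto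
  ultimately show ?case
    unfolding sum_eq using assms(1) digits_S by (simp add: digits_lsf_pos map_upt_Suc del: upt_Suc)
qed simp

definition palindromic :: "nat \<Rightarrow> (nat \<Rightarrow> 'a) \<Rightarrow> bool" where
  "palindromic n f \<longleftrightarrow> (\<forall>p<n. f (n - 1 - p) = f p)"

lemma rev_map_upt_eq_iff: "rev (map f [0..<n]) = map f [0..<n] \<longleftrightarrow> palindromic n f"
  by (auto simp: list_eq_iff_nth_eq rev_nth palindromic_def)

lemma palindrome_base_rep_iff:
  "k \<ge> 2 \<Longrightarrow>
    palindrome (base_rep k x) \<longleftrightarrow> palindromic (length (digits_lsf k x)) (\<lambda>p. x div k ^ p mod k)"
  unfolding palindrome_def base_rep_def rev_rev_ident rev_map_upt_eq_iff[symmetric]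
  by (subst (1 2) digits_lsf_eq_map) auto

lemma palindrome_base_rep_sum_powers:
  assumes "k \<ge> 2" and "\<And>p. p < n \<Longrightarrow> a p < k" and "a (n - 1) \<noteq> 0"
  shows "palindrome (base_rep k (\<Sum>p<n. a p * k ^ p)) \<longleftrightarrow> palindromic n a"
proof -
  have "digits_lsf k (\<Sum>p<n. a p * k ^ p) = map a [0..<n]"
    using assms by (rule digits_lsf_sum_powers)
  then show ?thesis
    by (metis palindrome_def base_rep_def rev_map_upt_eq_iff rev_rev_ident)
qed

lemma sum_powers_carry:
  fixes a b c :: "nat \<Rightarrow> 'a :: comm_semiring_1"
  assumes "\<And>p. a p + k * c (Suc p) = N * b p + c p"
  shows "(\<Sum>p<n. a p * k ^ p) + c n * k ^ n = N * (\<Sum>p<n. b p * k ^ p) + c 0"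
proof (induction n)
  case (Suc n)
  have "(\<Sum>p<Suc n. a p * k ^ p) + c (Suc n) * k ^ Suc n
        = (\<Sum>p<n. a p * k ^ p) + (a n + k * c (Suc n)) * k ^ n"
    by (simp add: algebra_simps)
  also have "\<dots> = ((\<Sum>p<n. a p * k ^ p) + c n * k ^ n) + N * b n * k ^ n"
    by (simp only: assms) (simp add: algebra_simps)
  also have "\<dots> = N * (\<Sum>p<Suc n. b p * k ^ p) + c 0"
    by (simp only: Suc.IH) (simp add: algebra_simps)
  finally show ?case .
qed simp

definition carry :: "nat \<Rightarrow> nat \<Rightarrow> nat \<Rightarrow> nat \<Rightarrow> nat" where
  "carry k N B p = N * (B mod k ^ p) div k ^ p"

lemma carry_0 [simp]: "carry k N B 0 = 0"
  by (simp add: carry_def)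

lemma carry_less: "0 < k \<Longrightarrow> 0 < N \<Longrightarrow> carry k N B p < N"
  by (simp add: carry_def less_mult_imp_div_less)

lemma carry_eq_0: "N * B < k ^ p \<Longrightarrow> B < k ^ p \<Longrightarrow> carry k N B p = 0"
  by (simp add: carry_def)

lemma mult_mod_power_eq_carry: "N * (B mod k ^ p) = N * B mod k ^ p + k ^ p * carry k N B p"
proof -
  have "N * (B mod k ^ p) mod k ^ p = N * B mod k ^ p"
    by (simp add: mod_mult_right_eq)
  then show ?thesis
    unfolding carry_def by (metis mod_mult_div_eq)
qed

lemma carry_recurrence:
  assumes "0 < k"
  shows "N * B div k ^ p mod k + k * carry k N B (Suc p) = N * (B div k ^ p mod k) + carry k N B p"
proof -
  have split: "x mod k ^ Suc p = x mod k ^ p + k ^ p * (x div k ^ p mod k)" for x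
    unfolding power_Suc2 mod_mult2_eq by simp
  have "N * B mod k ^ p + k ^ p * (N * B div k ^ p mod k + k * carry k N B (Suc p))
        = N * (B mod k ^ Suc p)"
    using mult_mod_power_eq_carry[of N B k "Suc p"] split[of "N * B"] by (simp add: algebra_simps)
  also have "\<dots> = N * B mod k ^ p + k ^ p * (N * (B div k ^ p mod k) + carry k N B p)"
    using mult_mod_power_eq_carry[of N B k p] split[of B] by (simp add: algebra_simps)
  finally show ?thesis
    using assms by simp
qed

definition excise :: "nat \<Rightarrow> nat \<Rightarrow> (nat \<Rightarrow> 'a) \<Rightarrow> nat \<Rightarrow> 'a" where
  "excise i l f p = (if p < i then f p else f (p + l))"

lemma excise_recurrence:
  fixes a b c :: "nat \<Rightarrow> 'a :: comm_semiring_1"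
  assumes "\<And>p. a p + k * c (Suc p) = N * b p + c p" and "c i = c (i + l)"
  shows "excise i l a p + k * excise i l c (Suc p) = N * excise i l b p + excise i l c p"
  using assms(1)[of p] assms(1)[of "p + l"] assms(2)
  by (cases "Suc p = i") (auto simp: excise_def)

lemma excise_shift:
  assumes "\<And>s. s < d \<Longrightarrow> f (u + l + s) = f (u + s)"
  shows "excise (u + d) l f = excise u l f"
proof
  fix p
  show "excise (u + d) l f p = excise u l f p"
    using assms[of "p - u"] by (auto simp: excise_def add.commute)
qed

lemma palindromic_excise_excise:
  assumes "palindromic n f" and "2 * (i + l) \<le> n"
  shows "palindromic (n - 2 * l) (excise (n - i - 2 * l) l (excise i l f))"
proof -
  define g where "g p = (if p < i then p else if p < n - i - 2 * l then p + l else p + 2 * l)" for p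
  have "excise (n - i - 2 * l) l (excise i l f) = f \<circ> g"
    using assms(2) by (auto simp: excise_def g_def fun_eq_iff mult_2 add.assoc)
  moreover have "g (n - 2 * l - 1 - p) = n - 1 - g p" "g p < n" if "p < n - 2 * l" for p
    using that assms(2) by (auto simp: g_def)
  ultimately show ?thesis
    using assms(1) by (auto simp: palindromic_def)
qed

text \<open>\<open>a\<close> and \<open>b\<close> are the base-\<open>k\<close> digits, least significant first, of palindromes with \<open>n\<close> and
  \<open>m\<close> digits, and \<open>c\<close> the carries of the schoolbook multiplication of \<open>b\<close> by \<open>N\<close>, which
  yields \<open>a\<close>.\<close>

definition palindromic_multiplication ::
    "nat \<Rightarrow> nat \<Rightarrow> nat \<Rightarrow> nat \<Rightarrow> (nat \<Rightarrow> nat) \<Rightarrow> (nat \<Rightarrow> nat) \<Rightarrow> (nat \<Rightarrow> nat) \<Rightarrow> bool" where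
  "palindromic_multiplication k N n m a b c \<longleftrightarrow>
     (\<forall>p. a p < k \<and> b p < k \<and> c p < N \<and> a p + k * c (Suc p) = N * b p + c p) \<and>
     c 0 = 0 \<and> c n = 0 \<and> (\<forall>p\<ge>m. b p = 0) \<and> m \<le> n \<and>
     palindromic n a \<and> palindromic m b \<and> a 0 \<noteq> 0 \<and> b 0 \<noteq> 0"

lemma palindromic_multiplication_digits:
  assumes "k \<ge> 2" and "0 < N" and "0 < B"
    and "palindrome (base_rep k (N * B))" and "palindrome (base_rep k B)"
  shows "palindromic_multiplication k N (length (digits_lsf k (N * B))) (length (digits_lsf k B))
           (\<lambda>p. N * B div k ^ p mod k) (\<lambda>p. B div k ^ p mod k) (carry k N B)"
proof -
  define n where "n = length (digits_lsf k (N * B))"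
  define m where "m = length (digits_lsf k B)"
  have "0 < N * B" using assms by simp
  have A_less: "N * B < k ^ n" and B_less: "B < k ^ m"
    unfolding n_def m_def using assms(1) by (simp_all add: less_power_length_digits_lsf)
  have "k ^ (m - 1) \<le> B"
    unfolding m_def using assms(1,3) by (rule power_length_digits_lsf_le)
  also have "B \<le> N * B" using assms by simp
  finally have "k ^ (m - 1) < k ^ n" using A_less by linarith
  then have "m \<le> n" using assms(1) by (simp add: power_less_imp_less_exp Suc_le_eq)
  have B_less_power: "B < k ^ p" if "m \<le> p" for p
    using B_less power_increasing[OF that, of k] assms(1) by linarith
  have "0 < m" unfolding m_def using assms(1,3) by (simp add: digits_lsf_pos)
  have pal_A: "palindromic n (\<lambda>p. N * B div k ^ p mod k)"
    and pal_B: "palindromic m (\<lambda>p. B div k ^ p mod k)"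
    using assms(4,5) unfolding n_def m_def palindrome_base_rep_iff[OF assms(1)] .
  have "N * B mod k = N * B div k ^ (n - 1) mod k"
    using pal_A \<open>0 < m\<close> \<open>m \<le> n\<close> by (auto simp: palindromic_def dest: spec[of _ "n - 1"])
  moreover have "B mod k = B div k ^ (m - 1) mod k"
    using pal_B \<open>0 < m\<close> by (auto simp: palindromic_def dest: spec[of _ "m - 1"])
  moreover have "carry k N B n = 0"
    using A_less B_less_power \<open>m \<le> n\<close> by (intro carry_eq_0) auto
  ultimately show ?thesis
    using assms \<open>0 < N * B\<close> \<open>m \<le> n\<close> B_less_power pal_A pal_B
      leading_digit_nonzero[of k "N * B"] leading_digit_nonzero[of k B]
      carry_less[of k N B] carry_recurrence[of k N B]
    unfolding palindromic_multiplication_def n_def[symmetric] m_def[symmetric]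
    by auto
qed

lemma palindromic_multiplication_numbers:
  assumes "k \<ge> 2" and "palindromic_multiplication k N n m a b c"
  obtains A B where "A = N * B" "A < k ^ n" "0 < A" "0 < B"
    "palindrome (base_rep k A)" "palindrome (base_rep k B)"
proof -
  note scheme = assms(2)[unfolded palindromic_multiplication_def]
  have "0 < m" using scheme by (auto intro: Nat.gr0I)
  then have "a (n - 1) \<noteq> 0" "b (m - 1) \<noteq> 0"
    using scheme by (auto simp: palindromic_def dest!: spec[of _ "n - 1"] spec[of _ "m - 1"])
  moreover have digits_lt: "\<And>p. a p < k" "\<And>p. b p < k" using scheme by auto
  ultimately have digits_A: "digits_lsf k (\<Sum>p<n. a p * k ^ p) = map a [0..<n]"
    and digits_B: "digits_lsf k (\<Sum>p<m. b p * k ^ p) = map b [0..<m]"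
    using assms(1) by (simp_all add: digits_lsf_sum_powers)
  have "(\<Sum>p<n. a p * k ^ p) = N * (\<Sum>p<n. b p * k ^ p)"
    using sum_powers_carry[of a k c N b n] scheme by simp
  also have "(\<Sum>p<n. b p * k ^ p) = (\<Sum>p<m. b p * k ^ p)"
    using scheme by (intro sum.mono_neutral_right) auto
  finally have "(\<Sum>p<n. a p * k ^ p) = N * (\<Sum>p<m. b p * k ^ p)" .
  moreover have "(\<Sum>p<n. a p * k ^ p) < k ^ n"
    using less_power_length_digits_lsf[OF assms(1)] digits_A by (metis length_map length_upt diff_zero)
  moreover have "0 < (\<Sum>p<n. a p * k ^ p)" "0 < (\<Sum>p<m. b p * k ^ p)"
    using digits_A digits_B \<open>0 < m\<close> scheme by (auto intro!: Nat.gr0I)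
  moreover have "palindrome (base_rep k (\<Sum>p<n. a p * k ^ p))"
    "palindrome (base_rep k (\<Sum>p<m. b p * k ^ p))"
    using scheme \<open>a (n - 1) \<noteq> 0\<close> \<open>b (m - 1) \<noteq> 0\<close> digits_lt
    by (simp_all add: palindrome_base_rep_sum_powers[OF assms(1)])
  ultimately show thesis by (rule that)
qed

text \<open>On the side of \<open>b\<close>, the mirror block is cut \<open>n - m\<close> places lower than on the side of
  \<open>a\<close>; the window hypothesis says that this makes no difference.\<close>

lemma palindromic_multiplication_excise:
  assumes scheme: "palindromic_multiplication k N n m a b c"
    and "0 < i" and "2 * (i + l) \<le> m"
    and carry_i: "c i = c (i + l)" and carry_n_i: "c (n - i - l) = c (n - i)"
    and window: "\<And>s. s < n - m \<Longrightarrow> b (m - i - l + s) = b (m - i + s)"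
  shows "palindromic_multiplication k N (n - 2 * l) (m - 2 * l)
           (excise (n - i - 2 * l) l (excise i l a)) (excise (m - i - 2 * l) l (excise i l b))
           (excise (n - i - 2 * l) l (excise i l c))"
proof -
  note facts = scheme[unfolded palindromic_multiplication_def]
  have "m \<le> n" using facts by simp
  have recurrence: "excise i l a p + k * excise i l c (Suc p) = N * excise i l b p + excise i l c p" for p
    using facts carry_i by (intro excise_recurrence) auto
  have carry_n_i': "excise i l c (n - i - 2 * l) = excise i l c (n - i - 2 * l + l)"
    using assms(3) \<open>m \<le> n\<close> carry_n_i by (simp add: excise_def add.commute)
  have "excise (m - i - 2 * l + (n - m)) l (excise i l b) = excise (m - i - 2 * l) l (excise i l b)"
    using assms(3) window by (intro excise_shift) (simp add: excise_def add.commute)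
  moreover have "m - i - 2 * l + (n - m) = n - i - 2 * l"
    using assms(3) \<open>m \<le> n\<close> by simp
  ultimately have b_shift: "excise (n - i - 2 * l) l (excise i l b) = excise (m - i - 2 * l) l (excise i l b)"
    by simp
  have "excise (n - i - 2 * l) l (excise i l a) p
      + k * excise (n - i - 2 * l) l (excise i l c) (Suc p)
    = N * excise (m - i - 2 * l) l (excise i l b) p + excise (n - i - 2 * l) l (excise i l c) p" for p
    using excise_recurrence[where a = "excise i l a" and b = "excise i l b" and c = "excise i l c",
      OF recurrence carry_n_i'] unfolding b_shift .
  then show ?thesis
    unfolding palindromic_multiplication_def
    using facts assms(2,3) \<open>m \<le> n\<close>
      palindromic_excise_excise[of n a i l] palindromic_excise_excise[of m b i l]
    by (auto simp: excise_def)
qed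

lemma palindromic_multiplication_repetition:
  assumes scheme: "palindromic_multiplication k N n m a b c" and short: "N * N * k ^ (n - m) < m div 2"
  obtains i l where "0 < i" "2 * (i + l) \<le> m" "0 < l" "c i = c (i + l)" "c (n - i - l) = c (n - i)"
    "\<And>s. s < n - m \<Longrightarrow> b (m - i - l + s) = b (m - i + s)"
proof -
  define state where "state i = (c i, c (n - i), map (\<lambda>s. b (m - i + s)) [0..<n - m])" for i
  define T where "T = {..<N} \<times> {..<N} \<times> {xs. set xs \<subseteq> {..<k} \<and> length xs = n - m}"
  have "state ` {1..m div 2} \<subseteq> T"
    using scheme by (auto simp: state_def T_def palindromic_multiplication_def)
  then have "card (state ` {1..m div 2}) \<le> card T"
    by (rule card_mono[rotated]) (simp add: T_def finite_lists_length_eq)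
  also have "card T = N * N * k ^ (n - m)"
    by (simp add: T_def card_cartesian_product card_lists_length_eq)
  finally have "\<not> inj_on state {1..m div 2}"
    using short by (intro pigeonhole) simp
  then obtain i j where "i \<in> {1..m div 2}" "j \<in> {1..m div 2}" "i < j" "state i = state j"
    unfolding inj_on_def by (metis linorder_neqE_nat)
  then show thesis
    by (intro that[of i "j - i"]) (auto simp: state_def list_eq_iff_nth_eq)
qed

lemma palindromic_multiplication_shorten:
  assumes "palindromic_multiplication k N n m a b c" and "N * N * k ^ (n - m) < m div 2"
  obtains l a' b' c' where "0 < l" "palindromic_multiplication k N (n - 2 * l) (m - 2 * l) a' b' c'"
proof -
  obtain i l where "0 < i" "2 * (i + l) \<le> m" "0 < l" "c i = c (i + l)" "c (n - i - l) = c (n - i)"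
    "\<And>s. s < n - m \<Longrightarrow> b (m - i - l + s) = b (m - i + s)"
    using palindromic_multiplication_repetition[OF assms] by blast
  then show thesis
    using that palindromic_multiplication_excise[OF assms(1), of i l] by blast
qed

lemma shorter_palindromic_multiple:
  assumes "k \<ge> 2" and "0 < N" and "0 < B"
    and "palindrome (base_rep k (N * B))" and "palindrome (base_rep k B)"
    and "N * N * k ^ (length (digits_lsf k (N * B)) - length (digits_lsf k B))
           < length (digits_lsf k B) div 2"
  obtains B' where "0 < B'" "N * B' < N * B"
    "palindrome (base_rep k (N * B'))" "palindrome (base_rep k B')"
proof -
  define n where "n = length (digits_lsf k (N * B))"
  obtain l a' b' c' where "0 < l"
    and "palindromic_multiplication k N (n - 2 * l) (length (digits_lsf k B) - 2 * l) a' b' c'"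
    using palindromic_multiplication_shorten palindromic_multiplication_digits[OF assms(1-5)] assms(6)
    unfolding n_def by blast
  then obtain A' B' where "A' = N * B'" "A' < k ^ (n - 2 * l)" "0 < B'"
      "palindrome (base_rep k A')" "palindrome (base_rep k B')"
    using assms(1) by (blast elim: palindromic_multiplication_numbers)
  moreover have "A' < N * B"
  proof -
    have "A' < k ^ (n - 2 * l)" by fact
    also have "\<dots> \<le> k ^ (n - 1)"
      using assms(1) \<open>0 < l\<close> by (intro power_increasing) auto
    also have "\<dots> \<le> N * B"
      unfolding n_def using assms by (intro power_length_digits_lsf_le) auto
    finally show ?thesis .
  qed
  ultimately show thesis
    using that by blast
qed

lemma length_digits_lsf_mult_le:
  assumes "k \<ge> 2" and "N \<le> k ^ L"
  shows "length (digits_lsf k (N * B)) \<le> L + length (digits_lsf k B)"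
proof (cases "N * B = 0")
  case True
  then show ?thesis by (simp only: digits_lsf_0 list.size)
next
  case False
  have "k ^ (length (digits_lsf k (N * B)) - 1) \<le> N * B"
    using assms(1) False by (intro power_length_digits_lsf_le) auto
  also have "\<dots> \<le> k ^ L * B"
    using assms(2) by simp
  also have "\<dots> < k ^ L * k ^ length (digits_lsf k B)"
    using assms(1) False less_power_length_digits_lsf[OF assms(1), of B] by simp
  finally show ?thesis
    using assms(1) by (simp add: power_add[symmetric] power_less_imp_less_exp)
qed

lemma le_power_ceiling_log:
  assumes "k \<ge> 2" and "0 < N"
  shows "N \<le> k ^ nat \<lceil>log (real k) (real N)\<rceil>"
proof -
  have "real N = real k powr log (real k) (real N)"
    using assms by simp
  also have "\<dots> \<le> real k powr \<lceil>log (real k) (real N)\<rceil>"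
    using assms by (intro powr_mono) auto
  also have "\<dots> = real k ^ nat \<lceil>log (real k) (real N)\<rceil>"
    using assms by (simp add: powr_realpow[symmetric])
  finally show ?thesis
    by (simp flip: of_nat_power)
qed

lemma length_minimal_palindromic_multiple_le:
  assumes "k \<ge> 2" and "0 < N" and "N \<le> k ^ L" and "0 < B"
    and "palindrome (base_rep k (N * B))" and "palindrome (base_rep k B)"
    and minimal: "\<And>B'. 0 < B' \<Longrightarrow> palindrome (base_rep k (N * B')) \<Longrightarrow> palindrome (base_rep k B')
                    \<Longrightarrow> N * B \<le> N * B'"
  shows "length (digits_lsf k (N * B)) \<le> L + 2 * (N * N * k ^ L) + 1"
proof -
  define n where "n = length (digits_lsf k (N * B))"
  define m where "m = length (digits_lsf k B)"
  have "m div 2 \<le> N * N * k ^ (n - m)"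
  proof (rule ccontr)
    assume "\<not> ?thesis"
    then have "N * N * k ^ (n - m) < m div 2" by simp
    then obtain B' where "0 < B'" "N * B' < N * B"
      "palindrome (base_rep k (N * B'))" "palindrome (base_rep k B')"
      using shorter_palindromic_multiple[OF assms(1,2,4-6)] unfolding n_def m_def by blast
    then show False
      using minimal[of B'] by simp
  qed
  have "n \<le> L + m"
    unfolding n_def m_def using assms(1,3) by (rule length_digits_lsf_mult_le)
  then have "k ^ (n - m) \<le> k ^ L"
    using assms(1) by (intro power_increasing) auto
  then have "m div 2 \<le> N * N * k ^ L"
    using \<open>m div 2 \<le> N * N * k ^ (n - m)\<close> by (meson le_trans mult_le_mono2)
  then show ?thesis
    using \<open>n \<le> L + m\<close> unfolding n_def by linarith
qed

theorem theorem7: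
  fixes k N :: nat
  assumes "k \<ge> 2" and "N \<ge> 1"
    and "\<not> N < k" and "\<not> k dvd N"
    and "\<exists>A B. A > 0 \<and> B > 0 \<and> palindrome (base_rep k A) \<and> palindrome (base_rep k B)
                 \<and> A = N * B"
  shows "int (length (base_rep k (LEAST A. A > 0 \<and> (\<exists>B. B > 0 \<and> palindrome (base_rep k A)
                 \<and> palindrome (base_rep k B) \<and> A = N * B))))
         \<le> 2 * (\<lceil>log (real k) (real N)\<rceil>
                + int k ^ nat \<lceil>log (real k) (real N)\<rceil> * int N ^ 2
                + \<lceil>log (real k) (real N) / 2\<rceil>) + 1"
proof -
  let ?P = "\<lambda>A. A > 0 \<and> (\<exists>B. B > 0 \<and> palindrome (base_rep k A)
                 \<and> palindrome (base_rep k B) \<and> A = N * B)"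
  define L where "L = nat \<lceil>log (real k) (real N)\<rceil>"
  obtain B where B: "0 < B" "palindrome (base_rep k (N * B))" "palindrome (base_rep k B)"
    and least: "Least ?P = N * B"
    using LeastI_ex[of ?P] assms(5) by auto
  have minimal: "N * B \<le> N * B'"
    if "0 < B'" "palindrome (base_rep k (N * B'))" "palindrome (base_rep k B')" for B'
    using Least_le[of ?P "N * B'"] that least by auto
  have "length (digits_lsf k (N * B)) \<le> L + 2 * (N * N * k ^ L) + 1"
    using assms(1,2) B minimal
    by (intro length_minimal_palindromic_multiple_le) (auto simp: L_def le_power_ceiling_log)
  then have "int (length (base_rep k (Least ?P))) \<le> int L + 2 * (int k ^ L * int N ^ 2) + 1"
    unfolding least by (simp add: base_rep_def power2_eq_square mult_ac flip: of_nat_mult of_nat_power)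
  moreover have "0 \<le> log (real k) (real N)"
    using assms(1,2) by simp
  then have "\<lceil>log (real k) (real N)\<rceil> = int L" "0 \<le> \<lceil>log (real k) (real N) / 2\<rceil>"
    by (simp_all add: L_def)
  ultimately show ?thesis
    unfolding L_def[symmetric] by (smt (verit) of_nat_0_le_iff)
qed

end
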